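(* For every $\rho\in(0,1)$ there exists an instance of the service-chain computing network model (a network $\mathcal{G}$, applications with single-task chains, increasing convex continuously differentiable cost functions $D_{ij}$, $C_i$, and input rates $\boldsymbol{r}$) together with a feasible strategy $\boldsymbol{\phi}\in\mathcal{D}_{\boldsymbol{\phi}}(\boldsymbol{r})$ that satisfies the KKT condition $$\frac{\partial T}{\partial \phi_{ij}(a,k)} \begin{cases} = \min_{j'\in\{0\}\cup\mathcal{V}} \frac{\partial T}{\partial \phi_{ij'}(a,k)}, & \text{if } \phi_{ij}(a,k)>0,\\ \geq \min_{j'\in\{0\}\cup\mathcal{V}} \frac{\partial T}{\partial \phi_{ij'}(a,k)}, & \text{if } \phi_{ij}(a,k)=0\end{cases}$$ for all $i,j,(a,k)$, such that $T(\boldsymbol{\phi}^* )/T(\boldsymbol{\phi})=\rho$, where $\boldsymbol{\phi}^*$ is a global optimal solution of $\min_{\boldsymbol{\phi}\in\mathcal{D}_{\boldsymbol{\phi}}(\boldsymbol{r})}T(\boldsymbol{\phi})$.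
   Context: Service-chain computing network model. $\mathcal{G}=(\mathcal{V},\mathcal{E})$ is a directed, strongly connected graph whose links are bidirectional ($(i,j)\in\mathcal{E}\Rightarrow(j,i)\in\mathcal{E}$). $\mathcal{A}$ is a finite set of applications; application $a$ has a destination $d_a\in\mathcal{V}$ and a chain of $|\mathcal{T}_a|$ tasks performed in order. The set of stages is $\mathcal{S}=\{(a,k): a\in\mathcal{A}, k=0,1,\dots,|\mathcal{T}_a|\}$; stage $(a,k)$ denotes packets that have completed the first $k$ tasks of $a$, and has packet size $L_{(a,k)}>0$. Exogenous input rates are $r_i(a)\ge 0$ (stage $(a,0)$ packets injected at node $i$), $\boldsymbol{r}=[r_i(a)]$. The forwarding strategy $\boldsymbol{\phi}=[\phi_{ij}(a,k)]_{(a,k)\in\mathcal{S},i\in\mathcal{V},j\in\{0\}\cup\mathcal{V}}$ has $\phi_{ij}(a,k)\in[0,1]$; for $j\in\mathcal{V}$ it is the fraction of node $i$'s stage-$(a,k)$ traffic sent to node $j$ (with $\phi_{ij}(a,k)=0$ if $(i,j)\notin\mathcal{E}$), and $\phi_{i0}(a,k)$ is the fraction sent to $i$'s local processor, which converts each stage-$(a,k)$ packet into one stage-$(a,k+1)$ packet; $\phi_{i0}(a,|\mathcal{T}_a|)=0$. Flow conservation: $\sum_{j\in\{0\}\cup\mathcal{V}}\phi_{ij}(a,k)=0$ if $k=|\mathcal{T}_a|$ and $i=d_a$, and $=1$ otherwise. Traffic $t_i(a,k)$ satisfies $t_i(a,0)=\sum_{j\in\mathcal{V}}t_j(a,0)\phi_{ji}(a,0)+r_i(a)$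 and, for $k\ge1$, $t_i(a,k)=\sum_{j\in\mathcal{V}}t_j(a,k)\phi_{ji}(a,k)+t_i(a,k-1)\phi_{i0}(a,k-1)$. Link flows $f_{ij}(a,k)=t_i(a,k)\phi_{ij}(a,k)$, processor inputs $g_i(a,k)=t_i(a,k)\phi_{i0}(a,k)$, total link flow $F_{ij}=\sum_{(a,k)\in\mathcal{S}}L_{(a,k)}f_{ij}(a,k)$, computation workload $G_i=\sum_{(a,k)\in\mathcal{S}}w_i(a,k)g_i(a,k)$ with weights $w_i(a,k)>0$. Link costs $D_{ij}(\cdot)$ and computation costs $C_i(\cdot)$ are increasing, continuously differentiable, convex functions (possibly taking value $+\infty$ outside a domain). Total cost $T(\boldsymbol{\phi})=\sum_{(i,j)\in\mathcal{E}}D_{ij}(F_{ij})+\sum_{i\in\mathcal{V}}C_i(G_i)$. The feasible set $\mathcal{D}_{\boldsymbol{\phi}}(\boldsymbol{r})$ consists of $\boldsymbol{\phi}$ satisfying flow conservation with all $D_{ij}(F_{ij})<\infty$ and $C_i(G_i)<\infty$. Marginal quantities: $\partial T/\partial t_i(a,k)$ is the marginal total cost of an additional exogenous injection of stage-$(a,k)$ traffic at node $i$ (with $\boldsymbol{\phi}$ fixed); it satisfies $\partial T/\partial t_{d_a}(a,|\mathcal{T}_a|)=0$, for $k=|\mathcal{T}_a|$: $\frac{\partial T}{\partial t_i(a,k)}=\sum_{j\in\mathcal{V}}\phi_{ij}(a,k)\big(L_{(a,k)}D'_{ij}(F_{ij})+\frac{\partial T}{\partial t_j(a,k)}\big)$,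 and for $k<|\mathcal{T}_a|$: $\frac{\partial T}{\partial t_i(a,k)}=\phi_{i0}(a,k)\big(w_i(a,k)C'_i(G_i)+\frac{\partial T}{\partial t_i(a,k+1)}\big)+\sum_{j\in\mathcal{V}}\phi_{ij}(a,k)\big(L_{(a,k)}D'_{ij}(F_{ij})+\frac{\partial T}{\partial t_j(a,k)}\big)$. The partial derivatives of $T$ are $\frac{\partial T}{\partial\phi_{ij}(a,k)}=t_i(a,k)\big(L_{(a,k)}D'_{ij}(F_{ij})+\frac{\partial T}{\partial t_j(a,k)}\big)$ for $(i,j)\in\mathcal{E}$, $\frac{\partial T}{\partial\phi_{i0}(a,k)}=t_i(a,k)\big(w_i(a,k)C'_i(G_i)+\frac{\partial T}{\partial t_i(a,k+1)}\big)$ for $k<|\mathcal{T}_a|$, and by convention $\partial T/\partial\phi_{ij}(a,k)=\infty$ for $(i,j)\notin\mathcal{E}$ and $\partial T/\partial\phi_{i0}(a,|\mathcal{T}_a|)=\infty$. *)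

theory Defs
  imports "HOL-Analysis.Analysis"
begin

text \<open>Next hop of a stage-(a,k) packet at node i: the local processor (the index 0
  of the paper) or a neighbouring node.\<close>
datatype hop = Proc | Nd nat

text \<open>L a k is the packet size of stage (a,k),
  w i a k the computation weight, Dc i j the link cost of (i,j), Cc i the computation cost
  of node i, r i a the exogenous input rate of application a at node i.\<close>
record inst =
  V     :: "nat set"
  E     :: "(nat \<times> nat) set"
  Apps  :: "nat set"
  dest  :: "nat \<Rightarrow> nat"
  ntask :: "nat \<Rightarrow> nat"
  L     :: "nat \<Rightarrow> nat \<Rightarrow> real"
  w     :: "nat \<Rightarrow> nat \<Rightarrow> nat \<Rightarrow> real"
  Dc    :: "nat \<Rightarrow> nat \<Rightarrow> real \<Rightarrow> real"
  Cc    :: "nat \<Rightarrow> real \<Rightarrow> real"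
  r     :: "nat \<Rightarrow> nat \<Rightarrow> real"

definition stages :: "inst \<Rightarrow> (nat \<times> nat) set" where
  "stages I = {(a,k). a \<in> Apps I \<and> k \<le> ntask I a}"

definition hops :: "inst \<Rightarrow> hop set" where
  "hops I = insert Proc (Nd ` V I)"

definition cost_fun :: "(real \<Rightarrow> real) \<Rightarrow> bool" where
  "cost_fun f \<longleftrightarrow> mono f \<and> convex_on UNIV f \<and> (\<forall>x. f differentiable (at x))
      \<and> continuous_on UNIV (deriv f)"

definition valid_instance :: "inst \<Rightarrow> bool" where
  "valid_instance I \<longleftrightarrow>
     finite (V I) \<and> V I \<noteq> {} \<and> E I \<subseteq> V I \<times> V I
     \<and> (\<forall>i j. (i,j) \<in> E I \<longrightarrow> (j,i) \<in> E I)
     \<and> (\<forall>i\<in>V I. \<forall>j\<in>V I. (i,j) \<in> (E I)\<^sup>*)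
     \<and> finite (Apps I) \<and> (\<forall>a\<in>Apps I. dest I a \<in> V I)
     \<and> (\<forall>(a,k)\<in>stages I. L I a k > 0)
     \<and> (\<forall>i\<in>V I. \<forall>(a,k)\<in>stages I. w I i a k > 0)
     \<and> (\<forall>(i,j)\<in>E I. cost_fun (Dc I i j))
     \<and> (\<forall>i\<in>V I. cost_fun (Cc I i))
     \<and> (\<forall>i\<in>V I. \<forall>a\<in>Apps I. r I i a \<ge> 0)"

text \<open>Strategies: phi a k i h is the fraction of node i's stage-(a,k) traffic sent to hop h.\<close>
type_synonym strategy = "nat \<Rightarrow> nat \<Rightarrow> nat \<Rightarrow> hop \<Rightarrow> real"
type_synonym nodefun = "nat \<Rightarrow> nat \<Rightarrow> nat \<Rightarrow> real"  (* a k i *)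

definition flow_conservation :: "inst \<Rightarrow> strategy \<Rightarrow> bool" where
  "flow_conservation I phi \<longleftrightarrow>
     (\<forall>(a,k)\<in>stages I. \<forall>i\<in>V I.
        (\<forall>h. 0 \<le> phi a k i h \<and> phi a k i h \<le> 1)
      \<and> (\<forall>j. (i,j) \<notin> E I \<longrightarrow> phi a k i (Nd j) = 0)
      \<and> phi a (ntask I a) i Proc = 0
      \<and> (\<Sum>h\<in>hops I. phi a k i h) = (if k = ntask I a \<and> i = dest I a then 0 else 1))"

text \<open>Traffic equations (t a k i = t_i(a,k)); t is taken to vanish outside the model's index set.\<close>
definition traffic_eq :: "inst \<Rightarrow> strategy \<Rightarrow> nodefun \<Rightarrow> bool" where
  "traffic_eq I phi t \<longleftrightarrow>
     (\<forall>a k i. \<not> ((a,k) \<in> stages I \<and> i \<in> V I) \<longrightarrow> t a k i = 0)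
   \<and> (\<forall>(a,k)\<in>stages I. \<forall>i\<in>V I.
        t a k i = (\<Sum>j\<in>V I. t a k j * phi a k j (Nd i))
                  + (if k = 0 then r I i a else t a (k - 1) i * phi a (k - 1) i Proc))"

definition traffic :: "inst \<Rightarrow> strategy \<Rightarrow> nodefun" where
  "traffic I phi = (THE t. traffic_eq I phi t)"

definition linkflow :: "inst \<Rightarrow> strategy \<Rightarrow> nat \<Rightarrow> nat \<Rightarrow> real" where
  "linkflow I phi i j = (\<Sum>(a,k)\<in>stages I. L I a k * (traffic I phi a k i * phi a k i (Nd j)))"

definition workload :: "inst \<Rightarrow> strategy \<Rightarrow> nat \<Rightarrow> real" where
  "workload I phi i = (\<Sum>(a,k)\<in>stages I. w I i a k * (traffic I phi a k i * phi a k i Proc))"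

definition total_cost :: "inst \<Rightarrow> strategy \<Rightarrow> real" where
  "total_cost I phi = (\<Sum>(i,j)\<in>E I. Dc I i j (linkflow I phi i j)) + (\<Sum>i\<in>V I. Cc I i (workload I phi i))"

text \<open>Feasible set: flow conservation, with the traffic determined uniquely by the traffic
  equations (all costs are real-valued, hence finite).\<close>
definition feasible :: "inst \<Rightarrow> strategy set" where
  "feasible I = {phi. flow_conservation I phi \<and> (\<exists>!t. traffic_eq I phi t)}"

text \<open>Marginal costs m a k i = dT/dt_i(a,k), defined by the recursive equations.\<close>
definition marginal_eq :: "inst \<Rightarrow> strategy \<Rightarrow> nodefun \<Rightarrow> bool" where
  "marginal_eq I phi m \<longleftrightarrow>
     (\<forall>a k i. \<not> ((a,k) \<in> stages I \<and> i \<in> V I) \<longrightarrow> m a k i = 0)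
   \<and> (\<forall>a\<in>Apps I. m a (ntask I a) (dest I a) = 0)
   \<and> (\<forall>(a,k)\<in>stages I. \<forall>i\<in>V I.
        m a k i = (if k < ntask I a
                   then phi a k i Proc * (w I i a k * deriv (Cc I i) (workload I phi i) + m a (k+1) i)
                   else 0)
                  + (\<Sum>j\<in>V I. phi a k i (Nd j) *
                        (L I a k * deriv (Dc I i j) (linkflow I phi i j) + m a k j)))"

definition marginal :: "inst \<Rightarrow> strategy \<Rightarrow> nodefun" where
  "marginal I phi = (THE m. marginal_eq I phi m)"

text \<open>Partial derivatives dT/dphi_{ih}(a,k), with value infinity for non-links and for
  processing beyond the last task.\<close>
definition dT_dphi :: "inst \<Rightarrow> strategy \<Rightarrow> nat \<Rightarrow> nat \<Rightarrow> nat \<Rightarrow> hop \<Rightarrow> ereal" where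
  "dT_dphi I phi a k i h = (case h of
      Nd j \<Rightarrow> (if (i,j) \<in> E I
               then ereal (traffic I phi a k i *
                      (L I a k * deriv (Dc I i j) (linkflow I phi i j) + marginal I phi a k j))
               else \<infinity>)
    | Proc \<Rightarrow> (if k < ntask I a
               then ereal (traffic I phi a k i *
                      (w I i a k * deriv (Cc I i) (workload I phi i) + marginal I phi a (k+1) i))
               else \<infinity>))"

definition KKT :: "inst \<Rightarrow> strategy \<Rightarrow> bool" where
  "KKT I phi \<longleftrightarrow> (\<exists>!m. marginal_eq I phi m) \<and>
     (\<forall>(a,k)\<in>stages I. \<forall>i\<in>V I. \<forall>h\<in>hops I.
        (phi a k i h > 0 \<longrightarrow>
           dT_dphi I phi a k i h = Min ((\<lambda>h'. dT_dphi I phi a k i h') ` hops I))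
      \<and> (phi a k i h = 0 \<longrightarrow>
           dT_dphi I phi a k i h \<ge> Min ((\<lambda>h'. dT_dphi I phi a k i h') ` hops I)))"

end

theory Submission
  imports Defs
begin

text \<open>Two nodes joined by a free link; one single-task application enters at node 0 and
  ends there.  Node 1 computes at fixed cost b, node 0 at cost b + (max x 0)^2.
  Processing locally at node 0 costs 2b + 1, offloading to node 1 costs 2b, which is optimal.
  Nevertheless local processing satisfies the KKT condition: node 1 receives no traffic and
  forwards unprocessed packets back to node 0, so its marginal cost for them equals node 0's,
  C'(1) = 2, and sending packets to node 1 looks exactly as expensive as processing them locally.
  Taking b = \<rho> / (2 (1 - \<rho>)) makes the cost ratio 2b / (2b + 1) equal to \<rho>.\<close>

lemma cost_funI:
  fixes f f' :: "real \<Rightarrow> real"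
  assumes deriv: "\<And>x. (f has_real_derivative f' x) (at x)"
    and mono: "mono f'" and nonneg: "\<And>x. f' x \<ge> 0" and cont: "continuous_on UNIV f'"
  shows "cost_fun f"
proof -
  have "deriv f = f'"
    using deriv DERIV_imp_deriv by blast
  moreover have "mono f"
    by (rule monoI) (use deriv nonneg deriv_nonneg_imp_mono in blast)
  moreover have "convex_on UNIV f"
    by (rule convex_on_realI[OF _ deriv]) (use mono in \<open>auto simp: mono_def\<close>)
  moreover have "f differentiable (at x)" for x
    using deriv real_differentiable_def by blast
  ultimately show ?thesis
    using cont by (simp add: cost_fun_def)
qed

lemma cost_fun_const: "cost_fun (\<lambda>_. c)"
  by (rule cost_funI[where f' = "\<lambda>_. 0"]) (auto simp: mono_def)

definition pos_sq :: "real \<Rightarrow> real" where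
  "pos_sq x = (max x 0)\<^sup>2"

lemma has_real_derivative_pos_sq: "(pos_sq has_real_derivative 2 * max x 0) (at x)"
proof (cases x "0::real" rule: linorder_cases)
  case less
  have "((\<lambda>_. 0) has_real_derivative 2 * max x 0) (at x)"
    using less by simp
  then show ?thesis
    by (rule has_field_derivative_transform_within_open[where S = "{..<0}"])
      (use less in \<open>auto simp: pos_sq_def\<close>)
next
  case equal
  have "(\<lambda>h. (pos_sq h - pos_sq 0) / h) = (\<lambda>h. max h 0)"
    by (auto simp: pos_sq_def power2_eq_square fun_eq_iff max_def)
  moreover have "((\<lambda>h::real. max h 0) \<longlongrightarrow> max 0 0) (at 0)"
    by (intro tendsto_intros)
  ultimately show ?thesis
    using equal by (simp add: DERIV_def)
next
  case greater
  have "((\<lambda>y. y\<^sup>2) has_real_derivative 2 * max x 0) (at x)"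
    using greater by (auto intro!: derivative_eq_intros)
  then show ?thesis
    by (rule has_field_derivative_transform_within_open[where S = "{0<..}"])
      (use greater in \<open>auto simp: pos_sq_def\<close>)
qed

lemma deriv_const_plus_pos_sq [simp]: "deriv (\<lambda>x. c + pos_sq x) x = 2 * max x 0"
  by (auto intro!: DERIV_imp_deriv derivative_eq_intros has_real_derivative_pos_sq)

lemma cost_fun_const_plus_pos_sq: "cost_fun (\<lambda>x. c + pos_sq x)"
  by (rule cost_funI[where f' = "\<lambda>x. 2 * max x 0"])
    (auto intro!: derivative_eq_intros has_real_derivative_pos_sq continuous_intros
      simp: mono_def)

definition supported :: "inst \<Rightarrow> nodefun \<Rightarrow> bool" where
  "supported I t \<longleftrightarrow> (\<forall>a k i. \<not> ((a,k) \<in> stages I \<and> i \<in> V I) \<longrightarrow> t a k i = 0)"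

lemma supported_if_traffic_eq: "traffic_eq I phi t \<Longrightarrow> supported I t"
  by (simp add: traffic_eq_def supported_def)

lemma supported_if_marginal_eq: "marginal_eq I phi m \<Longrightarrow> supported I m"
  by (simp add: marginal_eq_def supported_def)

lemma supported_eqI:
  assumes "supported I t" "supported I t'"
    and "\<And>a k i. (a,k) \<in> stages I \<Longrightarrow> i \<in> V I \<Longrightarrow> t a k i = t' a k i"
  shows "t = t'"
  using assms unfolding supported_def by (metis ext)

definition two_node_instance :: "real \<Rightarrow> inst" where
  "two_node_instance b =
     \<lparr>V = {0,1}, E = {(0,1),(1,0)}, Apps = {0}, dest = (\<lambda>_. 0), ntask = (\<lambda>_. 1),
      L = (\<lambda>_ _. 1), w = (\<lambda>_ _ _. 1), Dc = (\<lambda>_ _ _. 0),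
      Cc = (\<lambda>i x. if i = 0 then b + pos_sq x else b), r = (\<lambda>i a. if i = 0 then 1 else 0)\<rparr>"

lemma two_node_instance_simps [simp]:
  "V (two_node_instance b) = {0,1}"
  "E (two_node_instance b) = {(0,1),(1,0)}"
  "Apps (two_node_instance b) = {0}"
  "dest (two_node_instance b) = (\<lambda>_. 0)"
  "ntask (two_node_instance b) = (\<lambda>_. 1)"
  "L (two_node_instance b) = (\<lambda>_ _. 1)"
  "w (two_node_instance b) = (\<lambda>_ _ _. 1)"
  "Dc (two_node_instance b) = (\<lambda>_ _ _. 0)"
  "Cc (two_node_instance b) = (\<lambda>i x. if i = 0 then b + pos_sq x else b)"
  "r (two_node_instance b) = (\<lambda>i a. if i = 0 then 1 else 0)"
  by (simp_all add: two_node_instance_def)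

lemma stages_two_node_instance [simp]: "stages (two_node_instance b) = {(0,0),(0,1)}"
  by (auto simp: stages_def)

lemma hops_two_node_instance [simp]: "hops (two_node_instance b) = {Proc, Nd 0, Nd 1}"
  by (auto simp: hops_def)

lemma valid_two_node_instance: "valid_instance (two_node_instance b)"
proof -
  have "\<forall>i\<in>{0::nat,1}. \<forall>j\<in>{0,1}. (i,j) \<in> {(0::nat,1::nat),(1,0)}\<^sup>*"
    by (auto intro: converse_rtrancl_into_rtrancl)
  then show ?thesis
    by (auto simp: valid_instance_def cost_fun_const cost_fun_const_plus_pos_sq)
qed

definition local_strategy :: strategy where
  "local_strategy a k i h =
     (if (k = 0 \<and> i = 0 \<and> h = Proc) \<or> (i = 1 \<and> h = Nd 0) then 1 else 0)"

definition offload_strategy :: strategy where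
  "offload_strategy a k i h =
     (if (k = 0 \<and> i = 0 \<and> h = Nd 1) \<or> (k = 0 \<and> i = 1 \<and> h = Proc) \<or> (k = 1 \<and> i = 1 \<and> h = Nd 0)
      then 1 else 0)"

definition local_traffic :: nodefun where
  "local_traffic a k i = (if a = 0 \<and> k \<le> 1 \<and> i = 0 then 1 else 0)"

definition offload_traffic :: nodefun where
  "offload_traffic a k i = (if a = 0 \<and> k \<le> 1 \<and> i \<le> 1 then 1 else 0)"

definition local_marginal :: nodefun where
  "local_marginal a k i = (if a = 0 \<and> k = 0 \<and> i \<le> 1 then 2 else 0)"

lemma traffic_eq_local_strategy_iff:
  "traffic_eq (two_node_instance b) local_strategy t \<longleftrightarrow> t = local_traffic"
proof
  assume eq: "traffic_eq (two_node_instance b) local_strategy t"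
  then have at_support: "t 0 0 0 = 1" "t 0 0 1 = 0" "t 0 1 0 = 1" "t 0 1 1 = 0"
    by (simp_all add: traffic_eq_def local_strategy_def)
  show "t = local_traffic"
  proof (rule supported_eqI)
    show "supported (two_node_instance b) t"
      using eq by (rule supported_if_traffic_eq)
    show "supported (two_node_instance b) local_traffic"
      by (auto simp: supported_def local_traffic_def)
  qed (use at_support in \<open>auto simp: local_traffic_def\<close>)
qed (auto simp: traffic_eq_def local_traffic_def local_strategy_def)

lemma traffic_eq_offload_strategy_iff:
  "traffic_eq (two_node_instance b) offload_strategy t \<longleftrightarrow> t = offload_traffic"
proof
  assume eq: "traffic_eq (two_node_instance b) offload_strategy t"
  then have at_support: "t 0 0 0 = 1" "t 0 0 1 = 1" "t 0 1 0 = 1" "t 0 1 1 = 1"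
    by (simp_all add: traffic_eq_def offload_strategy_def)
  show "t = offload_traffic"
  proof (rule supported_eqI)
    show "supported (two_node_instance b) t"
      using eq by (rule supported_if_traffic_eq)
    show "supported (two_node_instance b) offload_traffic"
      by (auto simp: supported_def offload_traffic_def)
  qed (use at_support in \<open>auto simp: offload_traffic_def\<close>)
qed (auto simp: traffic_eq_def offload_traffic_def offload_strategy_def)


lemma traffic_local_strategy: "traffic (two_node_instance b) local_strategy = local_traffic"
  by (simp add: traffic_def traffic_eq_local_strategy_iff)

lemma traffic_offload_strategy: "traffic (two_node_instance b) offload_strategy = offload_traffic"
  by (simp add: traffic_def traffic_eq_offload_strategy_iff)

lemma feasible_local_strategy: "local_strategy \<in> feasible (two_node_instance b)"
  by (auto simp: feasible_def flow_conservation_def local_strategy_def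
      traffic_eq_local_strategy_iff)

lemma feasible_offload_strategy: "offload_strategy \<in> feasible (two_node_instance b)"
  by (auto simp: feasible_def flow_conservation_def offload_strategy_def
      traffic_eq_offload_strategy_iff)

lemma workload_local_strategy [simp]: "workload (two_node_instance b) local_strategy 0 = 1"
  by (simp add: workload_def traffic_local_strategy local_traffic_def local_strategy_def)

lemma marginal_eq_local_strategy_iff:
  "marginal_eq (two_node_instance b) local_strategy m \<longleftrightarrow> m = local_marginal"
proof
  assume eq: "marginal_eq (two_node_instance b) local_strategy m"
  then have at_support: "m 0 0 0 = 2" "m 0 0 1 = 2" "m 0 1 0 = 0" "m 0 1 1 = 0"
    by (simp_all add: marginal_eq_def local_strategy_def)
  show "m = local_marginal"
  proof (rule supported_eqI)
    show "supported (two_node_instance b) m"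
      using eq by (rule supported_if_marginal_eq)
    show "supported (two_node_instance b) local_marginal"
      by (auto simp: supported_def local_marginal_def)
  qed (use at_support in \<open>auto simp: local_marginal_def\<close>)
qed (auto simp: marginal_eq_def local_marginal_def local_strategy_def)


lemma marginal_local_strategy: "marginal (two_node_instance b) local_strategy = local_marginal"
  by (simp add: marginal_def marginal_eq_local_strategy_iff)

lemma dT_dphi_local_strategy:
  "dT_dphi (two_node_instance b) local_strategy 0 0 0 Proc = 2"
  "dT_dphi (two_node_instance b) local_strategy 0 0 0 (Nd 0) = \<infinity>"
  "dT_dphi (two_node_instance b) local_strategy 0 0 0 (Nd 1) = 2"
  "dT_dphi (two_node_instance b) local_strategy 0 0 1 Proc = 0"
  "dT_dphi (two_node_instance b) local_strategy 0 0 1 (Nd 0) = 0"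
  "dT_dphi (two_node_instance b) local_strategy 0 0 1 (Nd 1) = \<infinity>"
  "dT_dphi (two_node_instance b) local_strategy 0 1 i Proc = \<infinity>"
  "dT_dphi (two_node_instance b) local_strategy 0 1 0 (Nd 0) = \<infinity>"
  "dT_dphi (two_node_instance b) local_strategy 0 1 0 (Nd 1) = 0"
  "dT_dphi (two_node_instance b) local_strategy 0 1 1 (Nd 0) = 0"
  "dT_dphi (two_node_instance b) local_strategy 0 1 1 (Nd 1) = \<infinity>"
  by (simp_all add: dT_dphi_def traffic_local_strategy marginal_local_strategy
      local_traffic_def local_marginal_def zero_ereal_def)

lemma KKT_local_strategy: "KKT (two_node_instance b) local_strategy"
  using marginal_eq_local_strategy_iff
  by (simp add: KKT_def dT_dphi_local_strategy dT_dphi_local_strategy[unfolded One_nat_def])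
    (simp add: local_strategy_def)

lemma total_cost_local_strategy: "total_cost (two_node_instance b) local_strategy = 2 * b + 1"
  by (simp add: total_cost_def workload_def traffic_local_strategy local_traffic_def
      local_strategy_def pos_sq_def)

lemma total_cost_offload_strategy: "total_cost (two_node_instance b) offload_strategy = 2 * b"
  by (simp add: total_cost_def workload_def traffic_offload_strategy offload_traffic_def
      offload_strategy_def pos_sq_def)

lemma total_cost_two_node_instance_ge: "total_cost (two_node_instance b) psi \<ge> 2 * b"
  by (simp add: total_cost_def pos_sq_def)

theorem proposition1:
  fixes \<rho> :: real
  assumes "0 < \<rho>" and "\<rho> < 1"
  shows "\<exists>I phi phis.
           valid_instance I \<and> (\<forall>a\<in>Apps I. ntask I a = 1)
         \<and> phi \<in> feasible I \<and> KKT I phi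
         \<and> phis \<in> feasible I \<and> (\<forall>psi\<in>feasible I. total_cost I phis \<le> total_cost I psi)
         \<and> total_cost I phis / total_cost I phi = \<rho>"
proof -
  define b where "b = \<rho> / (2 * (1 - \<rho>))"
  let ?I = "two_node_instance b"
  have "total_cost ?I offload_strategy / total_cost ?I local_strategy = \<rho>"
    using assms by (simp add: total_cost_local_strategy total_cost_offload_strategy b_def
        field_simps)
  moreover have "\<forall>psi\<in>feasible ?I. total_cost ?I offload_strategy \<le> total_cost ?I psi"
    using total_cost_two_node_instance_ge by (simp add: total_cost_offload_strategy)
  ultimately show ?thesis
    using valid_two_node_instance feasible_local_strategy KKT_local_strategy
      feasible_offload_strategy by fastforce
qed

end
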